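(* Let $v\in V$ and suppose that no epistasis to $v$ is weak. If $S\subseteq V$ satisfies $\{s\}\not\Rightarrow v$ for every $s\in S$, then $S'\not\Rightarrow v$ for every $S'\subseteq S$.
   Context: Fix $\ell\ge 1$, loci $V=\{0,\dots,\ell-1\}$, chromosomes $\vec y\in\{0,1\}^V$, and a fitness function $f:\{0,1\}^V\to\mathbb R$ to be maximized. An assignment $A$ is a set of pairs $(v,a)$ ($v\in V$, $a\in\{0,1\}$) with at most one pair per locus; $A[v]=a$ if $(v,a)\in A$, else $A[v]=*$; coverage $\mathcal C(A)=\{v:A[v]\ne *\}$. $\Psi_A$ (constrained optima) is the set of chromosomes agreeing with $A$ on $\mathcal C(A)$ and of maximum fitness among all such chromosomes; $\Psi_A[v]=\{\psi_v:\psi\in\Psi_A\}$. Epistasis: for $v\in V$ and nonempty $S\subseteq V\setminus\{v\}$, $S\Rightarrow v$ iff for every $s\in S$ there exists an assignment $A$ with $\mathcal C(A)=S$ such that $\Psi_A[v]\neq\Psi_{A\setminus\{(s,A[s])\}}[v]$; the empty set is never epistatic to anything. An epistasis $S\Rightarrow v$ with $|S|\ge2$ is weak if no nonempty proper subset $T\subsetneq S$ satisfies $T\Rightarrow v$. *)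

theory Defs
  imports Complex_Main
begin

text \<open>A chromosome is a function nat => bool (True = allele 1)
  which is False outside V (canonical representative of an element of {0,1}^V).
  An assignment is a partial map from loci to alleles (at most one pair per locus),
  whose domain is the coverage.\<close>

definition loci :: "nat \<Rightarrow> nat set" where
  "loci l = {0..<l}"

definition chromosomes :: "nat \<Rightarrow> (nat \<Rightarrow> bool) set" where
  "chromosomes l = {y. \<forall>i. i \<ge> l \<longrightarrow> y i = False}"

definition agrees :: "(nat \<Rightarrow> bool) \<Rightarrow> (nat \<rightharpoonup> bool) \<Rightarrow> bool" where
  "agrees y A \<longleftrightarrow> (\<forall>v a. A v = Some a \<longrightarrow> y v = a)"

definition Psi :: "nat \<Rightarrow> ((nat \<Rightarrow> bool) \<Rightarrow> real) \<Rightarrow> (nat \<rightharpoonup> bool) \<Rightarrow> (nat \<Rightarrow> bool) set" where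
  "Psi l f A = {y \<in> chromosomes l. agrees y A \<and>
      (\<forall>z \<in> chromosomes l. agrees z A \<longrightarrow> f z \<le> f y)}"

definition Psi_at :: "nat \<Rightarrow> ((nat \<Rightarrow> bool) \<Rightarrow> real) \<Rightarrow> (nat \<rightharpoonup> bool) \<Rightarrow> nat \<Rightarrow> bool set" where
  "Psi_at l f A v = (\<lambda>y. y v) ` Psi l f A"

definition epistatic :: "nat \<Rightarrow> ((nat \<Rightarrow> bool) \<Rightarrow> real) \<Rightarrow> nat set \<Rightarrow> nat \<Rightarrow> bool" where
  "epistatic l f S v \<longleftrightarrow> v \<in> loci l \<and> S \<noteq> {} \<and> S \<subseteq> loci l - {v} \<and>
     (\<forall>s \<in> S. \<exists>A. dom A = S \<and> Psi_at l f A v \<noteq> Psi_at l f (A(s := None)) v)"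

definition weak_epistatic :: "nat \<Rightarrow> ((nat \<Rightarrow> bool) \<Rightarrow> real) \<Rightarrow> nat set \<Rightarrow> nat \<Rightarrow> bool" where
  "weak_epistatic l f S v \<longleftrightarrow> card S \<ge> 2 \<and> epistatic l f S v \<and>
     \<not> (\<exists>T. T \<noteq> {} \<and> T \<subset> S \<and> epistatic l f T v)"

end

theory Submission
  imports Defs
begin

(* An epistatic set of two or more loci is not weak, so it has a smaller nonempty epistatic
   subset; descending by strong induction, every epistatic set contains an epistatic singleton. *)

lemma epistatic_finite: "epistatic l f S v \<Longrightarrow> finite S"
  unfolding epistatic_def loci_def by (auto intro: finite_subset)

lemma epistatic_card_ge_1:
  assumes "epistatic l f S v"
  shows "card S \<ge> 1"
  using assms epistatic_finite[OF assms] unfolding epistatic_def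
  by (simp add: Suc_le_eq card_gt_0_iff)

lemma epistatic_has_epistatic_singleton:
  assumes no_weak: "\<forall>S0. \<not> weak_epistatic l f S0 v"
    and "epistatic l f S v"
  shows "\<exists>s \<in> S. epistatic l f {s} v"
  using epistatic_finite[OF assms(2)] assms(2)
proof (induction S rule: finite_psubset_induct)
  case (psubset S)
  show ?case
  proof (cases "card S \<ge> 2")
    case True
    moreover have "\<not> weak_epistatic l f S v"
      using no_weak by blast
    ultimately obtain T where "T \<subset> S" and "epistatic l f T v"
      using psubset.prems unfolding weak_epistatic_def by blast
    then obtain s where "s \<in> T" and "epistatic l f {s} v"
      using psubset.IH by blast
    with \<open>T \<subset> S\<close> show ?thesis by blast
  next
    case False
    with epistatic_card_ge_1[OF psubset.prems] have "card S = 1"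
      by linarith
    then obtain s where "S = {s}"
      by (rule card_1_singletonE)
    with psubset.prems show ?thesis by blast
  qed
qed

theorem proposition6:
  fixes l :: nat and f :: "(nat \<Rightarrow> bool) \<Rightarrow> real" and v :: nat and S :: "nat set"
  assumes "l \<ge> 1"
    and "v \<in> loci l"
    and "\<forall>S0. \<not> weak_epistatic l f S0 v"
    and "S \<subseteq> loci l"
    and "\<forall>s \<in> S. \<not> epistatic l f {s} v"
  shows "\<forall>S'. S' \<subseteq> S \<longrightarrow> \<not> epistatic l f S' v"
proof (intro allI impI notI)
  fix S' assume "S' \<subseteq> S" and "epistatic l f S' v"
  then obtain s where "s \<in> S'" and "epistatic l f {s} v"
    using epistatic_has_epistatic_singleton[OF assms(3)] by metis
  moreover have "s \<in> S"
    using \<open>S' \<subseteq> S\<close> \<open>s \<in> S'\<close> by (rule subsetD)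
  ultimately show False
    using assms(5) by simp
qed

end
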